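(* Let $\mathbb{F}_d$ be a field with the discrete topology, let $G$ be an effective ample Hausdorff groupoid, and let $\sigma\colon G^{(2)} \to \mathbb{F}_d^\times$ be a continuous $2$-cocycle. Let $Q$ be a ring and $\pi\colon A_{\mathbb{F}_d}(G,\sigma) \to Q$ a ring homomorphism. Then $\pi$ is injective if and only if $\pi(1_V) \neq 0$ for every nonempty compact open subset $V$ of $G^{(0)}$.
   Context: Groupoids are locally compact Hausdorff topological groupoids; $G$ is ample if it has a basis of compact open bisections; $G$ is effective if the interior of its isotropy $\{\gamma : r(\gamma) = s(\gamma)\}$ equals $G^{(0)}$. A continuous $2$-cocycle is a continuous (locally constant) $\sigma\colon G^{(2)} \to \mathbb{F}_d^\times$ with $\sigma(\alpha,\beta)\sigma(\alpha\beta,\gamma) = \sigma(\alpha,\beta\gamma)\sigma(\beta,\gamma)$ and $\sigma(r(\gamma),\gamma)=1=\sigma(\gamma,s(\gamma))$. $A_{\mathbb{F}_d}(G,\sigma)$ is the $\mathbb{F}_d$-vector space of locally constant compactly supported functions $G\to\mathbb{F}_d$ with multiplication $(fg)(\gamma) = \sum_{\alpha\beta=\gamma}\sigma(\alpha,\beta)f(\alpha)g(\beta)$; $1_V$ is the indicator function of $V$. *)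

theory Defs
  imports "HOL-Analysis.Analysis"
begin

text \<open>A groupoid is modelled on a whole type 'g, with range map r, source map s,
  partial multiplication m (meaningful on composable pairs, s x = r y) and inverse i.
  The unit space is the range of r.\<close>

definition composable :: "('g \<Rightarrow> 'g) \<Rightarrow> ('g \<Rightarrow> 'g) \<Rightarrow> ('g \<times> 'g) set" where
  "composable r s = {(x, y). s x = r y}"

definition units :: "('g \<Rightarrow> 'g) \<Rightarrow> 'g set" where
  "units r = range r"

definition groupoid ::
  "('g \<Rightarrow> 'g) \<Rightarrow> ('g \<Rightarrow> 'g) \<Rightarrow> ('g \<Rightarrow> 'g \<Rightarrow> 'g) \<Rightarrow> ('g \<Rightarrow> 'g) \<Rightarrow> bool" where
  "groupoid r s m i \<longleftrightarrow>
     (\<forall>x. r (r x) = r x \<and> s (r x) = r x \<and> r (s x) = s x \<and> s (s x) = s x) \<and>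
     (\<forall>x y. s x = r y \<longrightarrow> r (m x y) = r x \<and> s (m x y) = s y) \<and>
     (\<forall>x y z. s x = r y \<longrightarrow> s y = r z \<longrightarrow> m (m x y) z = m x (m y z)) \<and>
     (\<forall>x. m (r x) x = x \<and> m x (s x) = x) \<and>
     (\<forall>x. r (i x) = s x \<and> s (i x) = r x \<and> m x (i x) = r x \<and> m (i x) x = s x)"

definition locally_compact_type :: "'g::topological_space itself \<Rightarrow> bool" where
  "locally_compact_type _ \<longleftrightarrow>
     (\<forall>x::'g. \<exists>U K. open U \<and> compact K \<and> x \<in> U \<and> U \<subseteq> K)"

definition topological_groupoid ::
  "('g::topological_space \<Rightarrow> 'g) \<Rightarrow> ('g \<Rightarrow> 'g) \<Rightarrow> ('g \<Rightarrow> 'g \<Rightarrow> 'g) \<Rightarrow> ('g \<Rightarrow> 'g) \<Rightarrow> bool" where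
  "topological_groupoid r s m i \<longleftrightarrow>
     groupoid r s m i \<and> locally_compact_type TYPE('g) \<and>
     continuous_on (composable r s) (\<lambda>(x, y). m x y) \<and>
     continuous_on UNIV i \<and> continuous_on UNIV r \<and> continuous_on UNIV s"

text \<open>Open bisection: r and s restricted to B are homeomorphisms onto open sets
  (injective, open maps on B; continuity of r, s is part of topological_groupoid).\<close>
definition bisection :: "('g::topological_space \<Rightarrow> 'g) \<Rightarrow> ('g \<Rightarrow> 'g) \<Rightarrow> 'g set \<Rightarrow> bool" where
  "bisection r s B \<longleftrightarrow> open B \<and> inj_on r B \<and> inj_on s B \<and>
     (\<forall>U. U \<subseteq> B \<longrightarrow> open U \<longrightarrow> open (r ` U) \<and> open (s ` U))"

definition ample :: "('g::topological_space \<Rightarrow> 'g) \<Rightarrow> ('g \<Rightarrow> 'g) \<Rightarrow> bool" where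
  "ample r s \<longleftrightarrow> (\<forall>U x. open U \<and> x \<in> U \<longrightarrow>
     (\<exists>B. compact B \<and> bisection r s B \<and> x \<in> B \<and> B \<subseteq> U))"

definition effective :: "('g::topological_space \<Rightarrow> 'g) \<Rightarrow> ('g \<Rightarrow> 'g) \<Rightarrow> bool" where
  "effective r s \<longleftrightarrow> interior {g. r g = s g} = units r"

text \<open>Continuous (locally constant, F carries the discrete topology) 2-cocycle with
  values in the nonzero elements of F.\<close>
definition cocycle ::
  "('g::topological_space \<Rightarrow> 'g) \<Rightarrow> ('g \<Rightarrow> 'g) \<Rightarrow> ('g \<Rightarrow> 'g \<Rightarrow> 'g) \<Rightarrow> ('g \<times> 'g \<Rightarrow> 'a::field) \<Rightarrow> bool" where
  "cocycle r s m \<sigma> \<longleftrightarrow>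
     (\<forall>p \<in> composable r s. \<sigma> p \<noteq> 0) \<and>
     (\<forall>a b c. s a = r b \<longrightarrow> s b = r c \<longrightarrow>
        \<sigma> (a, b) * \<sigma> (m a b, c) = \<sigma> (a, m b c) * \<sigma> (b, c)) \<and>
     (\<forall>g. \<sigma> (r g, g) = 1 \<and> \<sigma> (g, s g) = 1) \<and>
     (\<forall>p \<in> composable r s. \<exists>W. open W \<and> p \<in> W \<and>
        (\<forall>q \<in> W \<inter> composable r s. \<sigma> q = \<sigma> p))"

definition steinberg :: "('g::topological_space \<Rightarrow> 'a::zero) set" where
  "steinberg = {f. (\<forall>x. \<exists>U. open U \<and> x \<in> U \<and> (\<forall>y \<in> U. f y = f x)) \<and>
                   compact (closure {x. f x \<noteq> 0})}"

definition twisted_conv ::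
  "('g \<Rightarrow> 'g) \<Rightarrow> ('g \<Rightarrow> 'g) \<Rightarrow> ('g \<Rightarrow> 'g \<Rightarrow> 'g) \<Rightarrow> ('g \<times> 'g \<Rightarrow> 'a::field)
     \<Rightarrow> ('g \<Rightarrow> 'a) \<Rightarrow> ('g \<Rightarrow> 'a) \<Rightarrow> ('g \<Rightarrow> 'a)" where
  "twisted_conv r s m \<sigma> f g = (\<lambda>\<gamma>.
     \<Sum>(a, b) \<in> {(a, b). s a = r b \<and> m a b = \<gamma> \<and> f a \<noteq> 0 \<and> g b \<noteq> 0}.
        \<sigma> (a, b) * f a * g b)"

text \<open>Ring homomorphism (rings need not be unital) from the Steinberg algebra.\<close>
definition steinberg_ring_hom ::
  "('g::topological_space \<Rightarrow> 'g) \<Rightarrow> ('g \<Rightarrow> 'g) \<Rightarrow> ('g \<Rightarrow> 'g \<Rightarrow> 'g) \<Rightarrow> ('g \<times> 'g \<Rightarrow> 'a::field)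
     \<Rightarrow> (('g \<Rightarrow> 'a) \<Rightarrow> 'q::ring) \<Rightarrow> bool" where
  "steinberg_ring_hom r s m \<sigma> \<pi> \<longleftrightarrow>
     (\<forall>f \<in> steinberg. \<forall>g \<in> steinberg.
        \<pi> (\<lambda>x. f x + g x) = \<pi> f + \<pi> g \<and> \<pi> (twisted_conv r s m \<sigma> f g) = \<pi> f * \<pi> g)"

end

theory Submission
  imports Defs
begin

text \<open>If \<pi> is injective, \<pi>(1_V) \<noteq> 0 simply because 1_V \<noteq> 0. Conversely, let
  0 \<noteq> h \<in> ker \<pi> with h(\<gamma>) \<noteq> 0. Choose a compact open bisection B around \<gamma>\<inverse> on which
  b \<mapsto> h(b\<inverse>) and b \<mapsto> \<sigma>(b\<inverse>, b) are constant. Effectiveness, applied to the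
  compact set of non-unit products supp(h) B, yields a nonempty compact open V \<subseteq> s(B) such that
  no product a b with a \<in> supp(h), b \<in> B and r(a), s(b) \<in> V lies outside the unit space. Then the only contribution to
  (1_V h) 1_{B \<inter> s\<inverse>(V)} comes from the pairs (b\<inverse>, b), so this product equals
  c 1_V with c = \<sigma>(\<gamma>, \<gamma>\<inverse>) h(\<gamma>) \<noteq> 0, and hence
  \<pi>(1_V) = \<pi>(1_V) \<pi>(h) \<pi>(c\<inverse> 1_{B \<inter> s\<inverse>(V)}) = 0.\<close>

section \<open>Locally constant functions and the Steinberg algebra\<close>

definition locally_constant :: "('a::topological_space \<Rightarrow> 'b) \<Rightarrow> bool" where
  "locally_constant f \<longleftrightarrow> (\<forall>x. \<exists>U. open U \<and> x \<in> U \<and> (\<forall>y\<in>U. f y = f x))"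

lemma steinberg_iff:
  "f \<in> steinberg \<longleftrightarrow> locally_constant f \<and> compact (closure {x. f x \<noteq> 0})"
  unfolding steinberg_def locally_constant_def by simp

lemma locally_constant_const: "locally_constant (\<lambda>x. c)"
  unfolding locally_constant_def by (auto intro: exI[of _ UNIV])

lemma locally_constant_binop:
  assumes "locally_constant f" "locally_constant g"
  shows "locally_constant (\<lambda>x. h (f x) (g x))"
  unfolding locally_constant_def
proof
  fix x
  obtain U where "open U" "x \<in> U" "\<forall>y\<in>U. f y = f x"
    using assms(1) unfolding locally_constant_def by blast
  moreover obtain U' where "open U'" "x \<in> U'" "\<forall>y\<in>U'. g y = g x"
    using assms(2) unfolding locally_constant_def by blast
  ultimately show "\<exists>W. open W \<and> x \<in> W \<and> (\<forall>y\<in>W. h (f y) (g y) = h (f x) (g x))"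
    by (metis IntD1 IntD2 IntI open_Int)
qed

lemma locally_constant_indicator:
  assumes "open V" "closed V"
  shows "locally_constant (indicator V)"
  unfolding locally_constant_def
proof
  fix x
  show "\<exists>U. open U \<and> x \<in> U \<and> (\<forall>y\<in>U. indicator V y = indicator V x)"
  proof (cases "x \<in> V")
    case True
    with assms show ?thesis by (intro exI[of _ V]) auto
  next
    case False
    with assms show ?thesis by (intro exI[of _ "- V"]) (auto simp: open_Compl)
  qed
qed

lemma locally_constant_indicator_comp:
  assumes "continuous_on UNIV f" "open V" "closed V"
  shows "locally_constant (\<lambda>x. indicator V (f x))"
proof -
  have "locally_constant (indicator (f -` V))"
    using assms by (intro locally_constant_indicator open_vimage closed_vimage)
  then show ?thesis
    unfolding indicator_vimage[symmetric] .
qed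

lemma steinbergI:
  fixes f :: "'g::t2_space \<Rightarrow> 'a::zero"
  assumes "locally_constant f" "compact K" "{x. f x \<noteq> 0} \<subseteq> K"
  shows "f \<in> steinberg"
proof -
  have "closure {x. f x \<noteq> 0} \<subseteq> K"
    using assms(2,3) by (simp add: closure_minimal compact_imp_closed)
  then have "compact (closure {x. f x \<noteq> 0})"
    using compact_Int_closed[OF assms(2) closed_closure, of "{x. f x \<noteq> 0}"]
    by (simp add: inf_absorb2)
  with assms(1) show ?thesis
    by (simp add: steinberg_iff)
qed

lemma indicator_in_steinberg:
  fixes V :: "'g::t2_space set"
  assumes "compact V" "open V"
  shows "(indicator V :: 'g \<Rightarrow> 'a::zero_neq_one) \<in> steinberg"
  using assms
  by (intro steinbergI[of _ V] locally_constant_indicator compact_imp_closed)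
    (auto simp: indicator_def)

lemma steinberg_mult_locally_constant:
  fixes f :: "'g::t2_space \<Rightarrow> 'a::mult_zero"
  assumes "f \<in> steinberg" "locally_constant g"
  shows "(\<lambda>x. g x * f x) \<in> steinberg"
proof (rule steinbergI)
  show "locally_constant (\<lambda>x. g x * f x)"
    using locally_constant_binop[of g f "(*)"] assms by (simp add: steinberg_iff)
  show "compact (closure {x. f x \<noteq> 0})"
    using assms(1) by (simp add: steinberg_iff)
  show "{x. g x * f x \<noteq> 0} \<subseteq> closure {x. f x \<noteq> 0}"
    using closure_subset[of "{x. f x \<noteq> 0}"] by force
qed

lemma steinberg_diff:
  fixes f g :: "'g::t2_space \<Rightarrow> 'a::ab_group_add"
  assumes "f \<in> steinberg" "g \<in> steinberg"
  shows "(\<lambda>x. f x - g x) \<in> steinberg"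
proof (rule steinbergI)
  show "locally_constant (\<lambda>x. f x - g x)"
    using locally_constant_binop[of f g "(-)"] assms by (simp add: steinberg_iff)
  show "compact (closure {x. f x \<noteq> 0} \<union> closure {x. g x \<noteq> 0})"
    using assms by (simp add: steinberg_iff compact_Un)
  show "{x. f x - g x \<noteq> 0} \<subseteq> closure {x. f x \<noteq> 0} \<union> closure {x. g x \<noteq> 0}"
    using closure_subset[of "{x. f x \<noteq> 0}"] closure_subset[of "{x. g x \<noteq> 0}"] by force
qed

lemma steinberg_ring_hom_add:
  assumes "steinberg_ring_hom r s m \<sigma> \<pi>" "f \<in> steinberg" "g \<in> steinberg"
  shows "\<pi> (\<lambda>x. f x + g x) = \<pi> f + \<pi> g"
  using assms unfolding steinberg_ring_hom_def by blast

lemma steinberg_ring_hom_diff: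
  fixes f g :: "'g::t2_space \<Rightarrow> 'a::field"
  assumes "steinberg_ring_hom r s m \<sigma> \<pi>" "f \<in> steinberg" "g \<in> steinberg"
  shows "\<pi> (\<lambda>x. f x - g x) = \<pi> f - \<pi> g"
  using steinberg_ring_hom_add[OF assms(1) steinberg_diff[OF assms(2,3)] assms(3)]
  by (simp add: eq_diff_eq)

lemma steinberg_ring_hom_mult:
  assumes "steinberg_ring_hom r s m \<sigma> \<pi>" "f \<in> steinberg" "g \<in> steinberg"
  shows "\<pi> (twisted_conv r s m \<sigma> f g) = \<pi> f * \<pi> g"
  using assms unfolding steinberg_ring_hom_def by blast

lemma inj_on_steinberg_iff_kernel:
  fixes \<pi> :: "('g::t2_space \<Rightarrow> 'a::field) \<Rightarrow> 'q::ring"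
  assumes hom: "steinberg_ring_hom r s m \<sigma> \<pi>"
  shows "inj_on \<pi> steinberg \<longleftrightarrow> (\<forall>h\<in>steinberg. \<pi> h = 0 \<longrightarrow> h = (\<lambda>x. 0))"
proof -
  have zero: "(\<lambda>x::'g. 0::'a) \<in> steinberg"
    by (rule steinbergI[of _ "{}"]) (auto intro: locally_constant_const)
  then have "\<pi> (\<lambda>x. 0) = 0"
    using steinberg_ring_hom_diff[OF hom zero zero] by simp
  moreover have "\<pi> f = \<pi> g \<longleftrightarrow> \<pi> (\<lambda>x. f x - g x) = 0" "f = g \<longleftrightarrow> (\<lambda>x. f x - g x) = (\<lambda>x. 0)"
    if "f \<in> steinberg" "g \<in> steinberg" for f g
    using steinberg_ring_hom_diff[OF hom that] by (auto simp: fun_eq_iff)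
  ultimately show ?thesis
    using zero steinberg_diff unfolding inj_on_def by metis
qed

section \<open>Groupoid identities and twisted convolution\<close>

lemma twisted_conv_eq_sum:
  assumes "finite P"
    and "P \<subseteq> {(a, b). s a = r b \<and> m a b = \<gamma>}"
    and "\<And>a b. s a = r b \<Longrightarrow> m a b = \<gamma> \<Longrightarrow> f a \<noteq> 0 \<Longrightarrow> g b \<noteq> 0 \<Longrightarrow> (a, b) \<in> P"
  shows "twisted_conv r s m \<sigma> f g \<gamma> = (\<Sum>(a, b)\<in>P. \<sigma> (a, b) * f a * g b)"
  unfolding twisted_conv_def using assms by (intro sum.mono_neutral_left) auto

lemma twisted_conv_scale_right:
  "twisted_conv r s m \<sigma> f (\<lambda>x. c * g x) = (\<lambda>\<gamma>. c * twisted_conv r s m \<sigma> f g \<gamma>)"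
proof (cases "c = 0")
  case False
  then show ?thesis
    by (simp add: twisted_conv_def sum_distrib_left case_prod_beta mult_ac)
qed (simp add: twisted_conv_def)

lemma cocycle_normalised: "cocycle r s m \<sigma> \<Longrightarrow> \<sigma> (r g, g) = 1"
  unfolding cocycle_def by blast

lemma cocycle_nonzero: "cocycle r s m \<sigma> \<Longrightarrow> s a = r b \<Longrightarrow> \<sigma> (a, b) \<noteq> 0"
  unfolding cocycle_def composable_def by blast

locale abstract_groupoid =
  fixes r s :: "'g \<Rightarrow> 'g" and m :: "'g \<Rightarrow> 'g \<Rightarrow> 'g" and i :: "'g \<Rightarrow> 'g"
  assumes is_groupoid: "groupoid r s m i"
begin

lemma range_source_simps [simp]:
  "r (r x) = r x" "s (r x) = r x" "r (s x) = s x" "s (s x) = s x" "r (i x) = s x" "s (i x) = r x"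
  using is_groupoid unfolding groupoid_def by auto

lemma unit_mult_simps [simp]:
  "m (r x) x = x" "m x (s x) = x" "m x (i x) = r x" "m (i x) x = s x"
  using is_groupoid unfolding groupoid_def by auto

lemma range_mult: "s x = r y \<Longrightarrow> r (m x y) = r x"
  and source_mult: "s x = r y \<Longrightarrow> s (m x y) = s y"
  using is_groupoid unfolding groupoid_def by auto

lemma mult_assoc: "s x = r y \<Longrightarrow> s y = r z \<Longrightarrow> m (m x y) z = m x (m y z)"
  using is_groupoid unfolding groupoid_def by auto

lemma inverse_inverse [simp]: "i (i x) = x"
proof -
  have "i (i x) = m (i (i x)) (s (i (i x)))"
    by (rule unit_mult_simps(2)[symmetric])
  also have "\<dots> = m (i (i x)) (m (i x) x)"
    by simp
  also have "\<dots> = m (m (i (i x)) (i x)) x"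
    by (rule mult_assoc[symmetric]) simp_all
  also have "\<dots> = x"
    by simp
  finally show ?thesis .
qed

lemma units_iff_range: "u \<in> units r \<longleftrightarrow> r u = u"
  unfolding units_def by (metis range_source_simps(1) rangeE rangeI)

lemma units_iff_source: "u \<in> units r \<longleftrightarrow> s u = u"
  unfolding units_iff_range by (metis range_source_simps(2,3))

lemma eq_inverse_if_mult_unit:
  assumes "s a = r b" "m a b \<in> units r"
  shows "a = i b"
proof -
  have "m a b = r (i b)"
    using assms source_mult[OF assms(1)] units_iff_source by simp
  have "a = m a (m b (i b))"
    by (metis assms(1) unit_mult_simps(2,3))
  also have "\<dots> = m (m a b) (i b)"
    using assms(1) by (simp add: mult_assoc)
  also have "\<dots> = i b"
    using \<open>m a b = r (i b)\<close> unit_mult_simps(1) by metis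
  finally show ?thesis .
qed

lemma twisted_conv_units_indicator_left:
  fixes \<sigma> :: "'g \<times> 'g \<Rightarrow> 'a::field"
  assumes "V \<subseteq> units r" and "\<And>g. \<sigma> (r g, g) = 1"
  shows "twisted_conv r s m \<sigma> (indicator V) q = (\<lambda>\<gamma>. indicator V (r \<gamma>) * q \<gamma>)"
proof
  fix \<gamma>
  have "twisted_conv r s m \<sigma> (indicator V) q \<gamma> =
      (\<Sum>(a, b)\<in>{(r \<gamma>, \<gamma>)}. \<sigma> (a, b) * indicator V a * q b)"
  proof (rule twisted_conv_eq_sum)
    fix a b
    assume "s a = r b" "m a b = \<gamma>" "indicator V a \<noteq> (0::'a)"
    then have "a = r b"
      using assms(1) units_iff_source by (auto simp: indicator_def split: if_splits)
    with \<open>m a b = \<gamma>\<close> show "(a, b) \<in> {(r \<gamma>, \<gamma>)}"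
      by auto
  qed simp_all
  then show "twisted_conv r s m \<sigma> (indicator V) q \<gamma> = indicator V (r \<gamma>) * q \<gamma>"
    using assms(2) by simp
qed

lemma twisted_conv_bisection_collapse:
  fixes \<sigma> :: "'g \<times> 'g \<Rightarrow> 'a::field"
  assumes inj: "inj_on s B"
    and V_units: "V \<subseteq> units r" and V_sources: "V \<subseteq> s ` B"
    and \<sigma>_const: "\<And>b. b \<in> B \<Longrightarrow> \<sigma> (i b, b) = \<sigma>\<^sub>0"
    and h_const: "\<And>b. b \<in> B \<Longrightarrow> h (i b) = c\<^sub>0"
    and products_units:
      "\<And>a b. s a = r b \<Longrightarrow> h a \<noteq> 0 \<Longrightarrow> b \<in> B \<Longrightarrow> r a \<in> V \<Longrightarrow> s b \<in> V \<Longrightarrow> m a b \<in> units r"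
  shows "twisted_conv r s m \<sigma> (\<lambda>\<gamma>. indicator V (r \<gamma>) * h \<gamma>) (indicator (B \<inter> s -` V))
    = (\<lambda>\<gamma>. \<sigma>\<^sub>0 * c\<^sub>0 * indicator V \<gamma>)"
proof
  fix \<gamma>
  let ?L = "\<lambda>\<gamma>. indicator V (r \<gamma>) * h \<gamma>" and ?R = "indicator (B \<inter> s -` V) :: 'g \<Rightarrow> 'a"
  have support: "a = i b \<and> b \<in> B \<and> s b = \<gamma> \<and> \<gamma> \<in> V"
    if "s a = r b" "m a b = \<gamma>" "?L a \<noteq> 0" "?R b \<noteq> 0" for a b
  proof -
    have "h a \<noteq> 0" "r a \<in> V" "b \<in> B" "s b \<in> V"
      using that(3,4) by (auto simp: indicator_def split: if_splits)
    then have "a = i b"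
      using products_units that(1) eq_inverse_if_mult_unit by blast
    with that(2) \<open>b \<in> B\<close> \<open>s b \<in> V\<close> show ?thesis
      by auto
  qed
  show "twisted_conv r s m \<sigma> ?L ?R \<gamma> = \<sigma>\<^sub>0 * c\<^sub>0 * indicator V \<gamma>"
  proof (cases "\<gamma> \<in> V")
    case True
    then obtain b\<^sub>0 where b\<^sub>0: "b\<^sub>0 \<in> B" "s b\<^sub>0 = \<gamma>"
      using V_sources by auto
    have "twisted_conv r s m \<sigma> ?L ?R \<gamma> = (\<Sum>(a, b)\<in>{(i b\<^sub>0, b\<^sub>0)}. \<sigma> (a, b) * ?L a * ?R b)"
    proof (rule twisted_conv_eq_sum)
      fix a b
      assume "s a = r b" "m a b = \<gamma>" "?L a \<noteq> 0" "?R b \<noteq> 0"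
      from support[OF this] have "a = i b" "b \<in> B" "s b = s b\<^sub>0"
        using b\<^sub>0(2) by simp_all
      then show "(a, b) \<in> {(i b\<^sub>0, b\<^sub>0)}"
        using inj b\<^sub>0(1) by (simp add: inj_on_eq_iff)
    qed (use b\<^sub>0 in simp_all)
    also have "\<dots> = \<sigma> (i b\<^sub>0, b\<^sub>0) * ?L (i b\<^sub>0) * ?R b\<^sub>0"
      by (simp only: sum.insert finite.emptyI empty_iff not_False_eq_True sum.empty
          add_0_right prod.case)
    also have "\<dots> = \<sigma>\<^sub>0 * c\<^sub>0 * indicator V \<gamma>"
      using True b\<^sub>0 \<sigma>_const[OF b\<^sub>0(1)] h_const[OF b\<^sub>0(1)] by simp
    finally show ?thesis .
  next
    case False
    have "twisted_conv r s m \<sigma> ?L ?R \<gamma> = (\<Sum>(a, b)\<in>{}. \<sigma> (a, b) * ?L a * ?R b)"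
    proof (rule twisted_conv_eq_sum)
      fix a b
      assume "s a = r b" "m a b = \<gamma>" "?L a \<noteq> 0" "?R b \<noteq> 0"
      from support[OF this] False show "(a, b) \<in> {}"
        by simp
    qed simp_all
    with False show ?thesis
      by simp
  qed
qed

end

section \<open>Ample effective groupoids\<close>

lemma bisection_open: "bisection r s B \<Longrightarrow> open B"
  and bisection_inj_source: "bisection r s B \<Longrightarrow> inj_on s B"
  and bisection_open_image: "bisection r s B \<Longrightarrow> U \<subseteq> B \<Longrightarrow> open U \<Longrightarrow> open (r ` U) \<and> open (s ` U)"
  unfolding bisection_def by blast+

locale ample_groupoid = abstract_groupoid r s m i
  for r s :: "'g::t2_space \<Rightarrow> 'g" and m i +
  assumes topological: "topological_groupoid r s m i"
    and ample: "ample r s"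
begin

lemma continuous_range: "continuous_on UNIV r"
  and continuous_source: "continuous_on UNIV s"
  and continuous_inverse: "continuous_on UNIV i"
  and continuous_mult: "continuous_on (composable r s) (\<lambda>(x, y). m x y)"
  using topological unfolding topological_groupoid_def by blast+

lemma compact_bisectionE:
  assumes "open U" "x \<in> U"
  obtains B where "compact B" "bisection r s B" "x \<in> B" "B \<subseteq> U"
  using ample assms unfolding ample_def by blast

lemma open_units: "open (units r)"
proof (subst open_subopen, intro ballI)
  fix u
  assume "u \<in> units r"
  then obtain x where "u = r x"
    unfolding units_def by blast
  obtain B where "bisection r s B" "x \<in> B"
    using compact_bisectionE[of UNIV x] by blast
  then have "open (r ` B)" "u \<in> r ` B" "r ` B \<subseteq> units r"
    using bisection_open_image[of r s B B] bisection_open \<open>u = r x\<close> by (auto simp: units_def)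
  then show "\<exists>T. open T \<and> u \<in> T \<and> T \<subseteq> units r"
    by blast
qed

lemma closed_units: "closed (units r)"
proof -
  have "units r = {x. r x = id x}"
    using units_iff_range by auto
  then show ?thesis
    using closed_Collect_eq[OF continuous_range continuous_on_id] by simp
qed

lemma compact_mult_image:
  assumes "compact K" "compact B"
  shows "compact ((\<lambda>(a, b). m a b) ` ((K \<times> B) \<inter> composable r s))"
proof (rule compact_continuous_image)
  have "composable r s = {p. (s \<circ> fst) p = (r \<circ> snd) p}"
    unfolding composable_def by auto
  moreover have "continuous_on UNIV (s \<circ> fst)" "continuous_on UNIV (r \<circ> snd)"
    by (rule continuous_on_compose[OF continuous_on_fst[OF continuous_on_id]],
        simp add: continuous_source)
      (rule continuous_on_compose[OF continuous_on_snd[OF continuous_on_id]],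
        simp add: continuous_range)
  ultimately have "closed (composable r s)"
    using closed_Collect_eq by metis
  then show "compact ((K \<times> B) \<inter> composable r s)"
    using compact_Times[OF assms] by blast
  show "continuous_on ((K \<times> B) \<inter> composable r s) (\<lambda>(a, b). m a b)"
    using continuous_mult by (rule continuous_on_subset) blast
qed

text \<open>Either an arrow of B with source in V moves its source, and Hausdorffness separates
  its range from its source; or B \<inter> s -` V is an open set of isotropy, hence empty
  by effectiveness.\<close>
lemma effective_avoid_bisection:
  assumes effective: "effective r s" and B: "bisection r s B" "B \<inter> units r = {}"
    and V: "open V" "V \<noteq> {}" "V \<subseteq> units r"
  obtains V' where "open V'" "V' \<noteq> {}" "V' \<subseteq> V" "B \<inter> r -` V' \<inter> s -` V' = {}"
proof (cases "\<exists>\<eta>\<in>B. s \<eta> \<in> V \<and> r \<eta> \<noteq> s \<eta>")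
  case True
  then obtain \<eta> where \<eta>: "\<eta> \<in> B" "s \<eta> \<in> V" "r \<eta> \<noteq> s \<eta>"
    by blast
  obtain O\<^sub>s O\<^sub>r where O: "open O\<^sub>s" "open O\<^sub>r" "s \<eta> \<in> O\<^sub>s" "r \<eta> \<in> O\<^sub>r" "O\<^sub>s \<inter> O\<^sub>r = {}"
    using separation_t2 \<eta>(3) by metis
  define V' where "V' = V \<inter> O\<^sub>s \<inter> s ` (B \<inter> r -` O\<^sub>r)"
  have "open (B \<inter> r -` O\<^sub>r)"
    using bisection_open[OF B(1)] open_vimage[OF O(2) continuous_range] by blast
  then have "open V'"
    unfolding V'_def using bisection_open_image[OF B(1)] V(1) O(1) by blast
  moreover have "s \<eta> \<in> V'"
    unfolding V'_def using \<eta> O by blast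
  moreover have "B \<inter> r -` V' \<inter> s -` V' = {}"
  proof (rule ccontr)
    assume "B \<inter> r -` V' \<inter> s -` V' \<noteq> {}"
    then obtain \<zeta> where "\<zeta> \<in> B" "r \<zeta> \<in> O\<^sub>s" "s \<zeta> \<in> s ` (B \<inter> r -` O\<^sub>r)"
      unfolding V'_def by blast
    then obtain \<zeta>' where "\<zeta>' \<in> B" "r \<zeta>' \<in> O\<^sub>r" "s \<zeta> = s \<zeta>'"
      by blast
    with \<open>\<zeta> \<in> B\<close> have "\<zeta> = \<zeta>'"
      using bisection_inj_source[OF B(1)] by (simp add: inj_on_eq_iff)
    then show False
      using \<open>r \<zeta> \<in> O\<^sub>s\<close> \<open>r \<zeta>' \<in> O\<^sub>r\<close> O(5) by blast
  qed
  moreover have "V' \<subseteq> V"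
    unfolding V'_def by blast
  ultimately show ?thesis
    using that by blast
next
  case False
  then have "B \<inter> s -` V \<subseteq> {g. r g = s g}"
    by blast
  moreover have "open (B \<inter> s -` V)"
    using bisection_open[OF B(1)] open_vimage[OF V(1) continuous_source] by blast
  ultimately have "B \<inter> s -` V \<subseteq> interior {g. r g = s g}"
    by (rule interior_maximal)
  then have "B \<inter> s -` V \<subseteq> units r"
    using effective unfolding effective_def by simp
  with B(2) have "B \<inter> r -` V \<inter> s -` V = {}"
    by blast
  then show ?thesis
    using that V by blast
qed

lemma effective_avoid_bisections:
  assumes effective: "effective r s" and "finite F"
    and F: "\<And>B. B \<in> F \<Longrightarrow> bisection r s B \<and> B \<inter> units r = {}"
    and V: "open V" "V \<noteq> {}" "V \<subseteq> units r"
  obtains V' where "open V'" "V' \<noteq> {}" "V' \<subseteq> V" "\<Union>F \<inter> r -` V' \<inter> s -` V' = {}"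
proof -
  have "\<exists>V'. open V' \<and> V' \<noteq> {} \<and> V' \<subseteq> V \<and> \<Union>F \<inter> r -` V' \<inter> s -` V' = {}"
    using \<open>finite F\<close> F
  proof (induction F rule: finite_induct)
    case empty
    show ?case
      using V by (intro exI[of _ V]) simp
  next
    case (insert B F)
    have "\<And>B'. B' \<in> F \<Longrightarrow> bisection r s B' \<and> B' \<inter> units r = {}"
      using insert.prems by simp
    from insert.IH[OF this] obtain V\<^sub>1
      where V\<^sub>1: "open V\<^sub>1" "V\<^sub>1 \<noteq> {}" "V\<^sub>1 \<subseteq> V" "\<Union>F \<inter> r -` V\<^sub>1 \<inter> s -` V\<^sub>1 = {}"
      by blast
    have "bisection r s B" "B \<inter> units r = {}" "V\<^sub>1 \<subseteq> units r"
      using insert.prems V\<^sub>1(3) V(3) by auto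
    then obtain V\<^sub>2 where V\<^sub>2: "open V\<^sub>2" "V\<^sub>2 \<noteq> {}" "V\<^sub>2 \<subseteq> V\<^sub>1" "B \<inter> r -` V\<^sub>2 \<inter> s -` V\<^sub>2 = {}"
      using effective_avoid_bisection[OF effective] V\<^sub>1(1,2) by metis
    have "\<Union>(insert B F) \<inter> r -` V\<^sub>2 \<inter> s -` V\<^sub>2 = {}"
      using V\<^sub>1(4) V\<^sub>2(3,4) by blast
    then show ?case
      using V\<^sub>1(3) V\<^sub>2(1-3) by blast
  qed
  then show ?thesis
    using that by blast
qed

lemma effective_avoid_compact:
  assumes effective: "effective r s"
    and C: "compact C" "C \<inter> units r = {}"
    and V: "open V" "V \<noteq> {}" "V \<subseteq> units r"
  obtains V' where "open V'" "V' \<noteq> {}" "V' \<subseteq> V" "C \<inter> r -` V' \<inter> s -` V' = {}"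
proof -
  have "open (- units r)"
    using closed_units by auto
  have "\<exists>B. bisection r s B \<and> \<gamma> \<in> B \<and> B \<subseteq> - units r" if "\<gamma> \<in> C" for \<gamma>
  proof -
    have "\<gamma> \<in> - units r"
      using C(2) that by blast
    then show ?thesis
      using compact_bisectionE[OF \<open>open (- units r)\<close>] by metis
  qed
  then obtain B where B: "\<And>\<gamma>. \<gamma> \<in> C \<Longrightarrow> bisection r s (B \<gamma>) \<and> \<gamma> \<in> B \<gamma> \<and> B \<gamma> \<subseteq> - units r"
    by metis
  have "\<And>\<gamma>. \<gamma> \<in> C \<Longrightarrow> open (B \<gamma>)" "C \<subseteq> (\<Union>\<gamma>\<in>C. B \<gamma>)"
    using B bisection_open by blast+
  then obtain C' where C': "C' \<subseteq> C" "finite C'" "C \<subseteq> (\<Union>\<gamma>\<in>C'. B \<gamma>)"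
    by (rule compactE_image[OF C(1)])
  have "\<And>B'. B' \<in> B ` C' \<Longrightarrow> bisection r s B' \<and> B' \<inter> units r = {}"
    using B C'(1) by blast
  then obtain V' where "open V'" "V' \<noteq> {}" "V' \<subseteq> V" "\<Union>(B ` C') \<inter> r -` V' \<inter> s -` V' = {}"
    using effective_avoid_bisections[OF effective finite_imageI[OF C'(2)] _ V] by blast
  then show ?thesis
    using that C'(3) by blast
qed

lemma compact_bisection_inverse_constant:
  fixes \<sigma> :: "'g \<times> 'g \<Rightarrow> 'a::field"
  assumes cocycle: "cocycle r s m \<sigma>" and h: "locally_constant h"
  obtains B where "compact B" "bisection r s B" "i \<gamma> \<in> B"
    "\<And>b. b \<in> B \<Longrightarrow> \<sigma> (i b, b) = \<sigma> (\<gamma>, i \<gamma>)" "\<And>b. b \<in> B \<Longrightarrow> h (i b) = h \<gamma>"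
proof -
  have "(\<gamma>, i \<gamma>) \<in> composable r s"
    unfolding composable_def by simp
  then obtain W where W: "open W" "(\<gamma>, i \<gamma>) \<in> W"
    and \<sigma>_W: "\<And>q. q \<in> W \<inter> composable r s \<Longrightarrow> \<sigma> q = \<sigma> (\<gamma>, i \<gamma>)"
    using cocycle unfolding cocycle_def by metis
  obtain S T where ST: "open S" "open T" "(\<gamma>, i \<gamma>) \<in> S \<times> T" "S \<times> T \<subseteq> W"
    by (rule open_prod_elim[OF W])
  obtain U where U: "open U" "\<gamma> \<in> U" and h_U: "\<And>y. y \<in> U \<Longrightarrow> h y = h \<gamma>"
    using h unfolding locally_constant_def by metis
  have "open (T \<inter> i -` (S \<inter> U))" "i \<gamma> \<in> T \<inter> i -` (S \<inter> U)"
    using ST(1-3) U open_vimage[OF _ continuous_inverse] by auto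
  then obtain B where B: "compact B" "bisection r s B" "i \<gamma> \<in> B" "B \<subseteq> T \<inter> i -` (S \<inter> U)"
    by (rule compact_bisectionE)
  show ?thesis
  proof (rule that[OF B(1-3)])
    fix b
    assume "b \<in> B"
    then have "(i b, b) \<in> W \<inter> composable r s"
      using B(4) ST(4) by (auto simp: composable_def)
    then show "\<sigma> (i b, b) = \<sigma> (\<gamma>, i \<gamma>)"
      by (rule \<sigma>_W)
  next
    fix b
    assume "b \<in> B"
    then have "i b \<in> U"
      using B(4) by auto
    then show "h (i b) = h \<gamma>"
      by (rule h_U)
  qed
qed

lemma unit_set_isolating_products:
  assumes effective: "effective r s" and K: "compact K"
    and B: "compact B" "bisection r s B" "B \<noteq> {}"
  obtains V where "V \<noteq> {}" "compact V" "open V" "V \<subseteq> s ` B"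
    "\<And>a b. a \<in> K \<Longrightarrow> b \<in> B \<Longrightarrow> s a = r b \<Longrightarrow> r a \<in> V \<Longrightarrow> s b \<in> V \<Longrightarrow> m a b \<in> units r"
proof -
  define C where "C = (\<lambda>(a, b). m a b) ` ((K \<times> B) \<inter> composable r s) - units r"
  have "compact C"
    unfolding C_def using compact_mult_image[OF K B(1)] open_units by (rule compact_diff)
  moreover have "C \<inter> units r = {}"
    unfolding C_def by blast
  moreover have "open (s ` B)" "s ` B \<noteq> {}" "s ` B \<subseteq> units r"
    using bisection_open_image[OF B(2) order_refl bisection_open[OF B(2)]] B(3)
    by (auto simp: units_iff_source)
  ultimately obtain V\<^sub>1
    where V\<^sub>1: "open V\<^sub>1" "V\<^sub>1 \<noteq> {}" "V\<^sub>1 \<subseteq> s ` B" "C \<inter> r -` V\<^sub>1 \<inter> s -` V\<^sub>1 = {}"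
    by (rule effective_avoid_compact[OF effective])
  then obtain x where "x \<in> V\<^sub>1"
    by blast
  with V\<^sub>1(1) obtain V where V: "compact V" "bisection r s V" "x \<in> V" "V \<subseteq> V\<^sub>1"
    by (rule compact_bisectionE)
  show ?thesis
  proof (rule that)
    show "V \<noteq> {}" "compact V" "open V" "V \<subseteq> s ` B"
      using V V\<^sub>1(3) bisection_open by auto
    fix a b
    assume ab: "a \<in> K" "b \<in> B" "s a = r b" "r a \<in> V" "s b \<in> V"
    show "m a b \<in> units r"
    proof (rule ccontr)
      assume "m a b \<notin> units r"
      with ab(1-3) have "m a b \<in> C"
        unfolding C_def composable_def by force
      moreover have "r (m a b) \<in> V\<^sub>1" "s (m a b) \<in> V\<^sub>1"
        using range_mult[OF ab(3)] source_mult[OF ab(3)] ab(4,5) V(4) by auto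
      ultimately show False
        using V\<^sub>1(4) by blast
    qed
  qed
qed

lemma steinberg_mult_range_indicator:
  fixes h :: "'g \<Rightarrow> 'a::{zero_neq_one, mult_zero}"
  assumes "h \<in> steinberg" "compact V" "open V"
  shows "(\<lambda>x. indicator V (r x) * h x) \<in> steinberg"
  using assms(1)
    locally_constant_indicator_comp[OF continuous_range assms(3) compact_imp_closed[OF assms(2)]]
  by (rule steinberg_mult_locally_constant)

lemma steinberg_scaled_source_indicator:
  fixes c :: "'a::{zero_neq_one, mult_zero}"
  assumes "compact B" "bisection r s B" "compact V" "open V"
  shows "(\<lambda>x. c * indicator (B \<inter> s -` V) x) \<in> steinberg"
proof -
  have "compact (B \<inter> s -` V)"
    using compact_Int_closed[OF assms(1)
        closed_vimage[OF compact_imp_closed[OF assms(3)] continuous_source]] .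
  moreover have "open (B \<inter> s -` V)"
    using bisection_open[OF assms(2)] open_vimage[OF assms(4) continuous_source] by blast
  ultimately have "indicator (B \<inter> s -` V) \<in> steinberg"
    by (rule indicator_in_steinberg)
  then show ?thesis
    using locally_constant_const by (rule steinberg_mult_locally_constant)
qed

lemma unit_indicator_factorisation:
  fixes \<sigma> :: "'g \<times> 'g \<Rightarrow> 'a::field"
  assumes effective: "effective r s" and cocycle: "cocycle r s m \<sigma>"
    and h: "h \<in> steinberg" "h \<gamma> \<noteq> 0"
  obtains V R where "V \<noteq> {}" "V \<subseteq> units r" "compact V" "open V"
    "twisted_conv r s m \<sigma> (indicator V) h \<in> steinberg" "R \<in> steinberg"
    "twisted_conv r s m \<sigma> (twisted_conv r s m \<sigma> (indicator V) h) R = indicator V"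
proof -
  define K where "K = closure {x. h x \<noteq> 0}"
  have "locally_constant h" "compact K"
    using h(1) unfolding K_def steinberg_iff by auto
  obtain B where B: "compact B" "bisection r s B" "i \<gamma> \<in> B"
    and \<sigma>_B: "\<And>b. b \<in> B \<Longrightarrow> \<sigma> (i b, b) = \<sigma> (\<gamma>, i \<gamma>)"
    and h_B: "\<And>b. b \<in> B \<Longrightarrow> h (i b) = h \<gamma>"
    by (rule compact_bisection_inverse_constant[OF cocycle \<open>locally_constant h\<close>, where \<gamma> = \<gamma>])
      (rule that)
  then have "B \<noteq> {}"
    by blast
  obtain V where V: "V \<noteq> {}" "compact V" "open V" "V \<subseteq> s ` B"
    and products_units:
      "\<And>a b. a \<in> K \<Longrightarrow> b \<in> B \<Longrightarrow> s a = r b \<Longrightarrow> r a \<in> V \<Longrightarrow> s b \<in> V \<Longrightarrow> m a b \<in> units r"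
    by (rule unit_set_isolating_products[OF effective \<open>compact K\<close> B(1,2) \<open>B \<noteq> {}\<close>])
      (rule that)
  have "V \<subseteq> units r"
    using V(4) by (auto simp: units_iff_source)
  define c where "c = \<sigma> (\<gamma>, i \<gamma>) * h \<gamma>"
  have "c \<noteq> 0"
    unfolding c_def using cocycle_nonzero[OF cocycle] h(2) by simp
  have left: "twisted_conv r s m \<sigma> (indicator V) h = (\<lambda>x. indicator V (r x) * h x)"
    by (rule twisted_conv_units_indicator_left[OF \<open>V \<subseteq> units r\<close>, where \<sigma> = \<sigma>])
      (rule cocycle_normalised[OF cocycle])
  have "twisted_conv r s m \<sigma> (\<lambda>x. indicator V (r x) * h x) (indicator (B \<inter> s -` V))
      = (\<lambda>x. c * indicator V x)"
    unfolding c_def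
  proof (rule twisted_conv_bisection_collapse[OF bisection_inj_source[OF B(2)] \<open>V \<subseteq> units r\<close> V(4)])
    show "\<And>b. b \<in> B \<Longrightarrow> \<sigma> (i b, b) = \<sigma> (\<gamma>, i \<gamma>)" "\<And>b. b \<in> B \<Longrightarrow> h (i b) = h \<gamma>"
      by (fact \<sigma>_B, fact h_B)
  next
    fix a b
    assume "h a \<noteq> 0"
    then have "a \<in> K"
      unfolding K_def using closure_subset[of "{x. h x \<noteq> 0}"] by blast
    then show "s a = r b \<Longrightarrow> b \<in> B \<Longrightarrow> r a \<in> V \<Longrightarrow> s b \<in> V \<Longrightarrow> m a b \<in> units r"
      by (rule products_units)
  qed
  then have factorisation: "twisted_conv r s m \<sigma> (twisted_conv r s m \<sigma> (indicator V) h)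
      (\<lambda>x. inverse c * indicator (B \<inter> s -` V) x) = indicator V"
    unfolding left twisted_conv_scale_right using \<open>c \<noteq> 0\<close> by (simp add: fun_eq_iff)
  have "twisted_conv r s m \<sigma> (indicator V) h \<in> steinberg"
    unfolding left using h(1) V(2,3) by (rule steinberg_mult_range_indicator)
  moreover have "(\<lambda>x. inverse c * indicator (B \<inter> s -` V) x) \<in> steinberg"
    using B(1,2) V(2,3) by (rule steinberg_scaled_source_indicator)
  ultimately show ?thesis
    by (rule that[OF V(1) \<open>V \<subseteq> units r\<close> V(2,3) _ _ factorisation])
qed

lemma unit_indicator_in_kernel:
  fixes \<sigma> :: "'g \<times> 'g \<Rightarrow> 'a::field" and \<pi> :: "('g \<Rightarrow> 'a) \<Rightarrow> 'q::ring"
  assumes effective: "effective r s" and cocycle: "cocycle r s m \<sigma>"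
    and hom: "steinberg_ring_hom r s m \<sigma> \<pi>"
    and h: "h \<in> steinberg" "\<pi> h = 0" "h \<gamma> \<noteq> 0"
  obtains V where "V \<noteq> {}" "V \<subseteq> units r" "compact V" "open V" "\<pi> (indicator V) = 0"
proof -
  obtain V R where V: "V \<noteq> {}" "V \<subseteq> units r" "compact V" "open V"
    and L: "twisted_conv r s m \<sigma> (indicator V) h \<in> steinberg" and R: "R \<in> steinberg"
    and factorisation: "twisted_conv r s m \<sigma> (twisted_conv r s m \<sigma> (indicator V) h) R = indicator V"
    by (rule unit_indicator_factorisation[OF effective cocycle h(1,3)])
  have "indicator V \<in> steinberg"
    using V(3,4) by (rule indicator_in_steinberg)
  have "\<pi> (indicator V) = \<pi> (twisted_conv r s m \<sigma> (indicator V) h) * \<pi> R"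
    using steinberg_ring_hom_mult[OF hom L R] factorisation by simp
  also have "\<dots> = \<pi> (indicator V) * \<pi> h * \<pi> R"
    using steinberg_ring_hom_mult[OF hom \<open>indicator V \<in> steinberg\<close> h(1)] by simp
  finally have "\<pi> (indicator V) = 0"
    using h(2) by simp
  with V show ?thesis
    by (rule that)
qed

end

theorem theorem6p1:
  fixes r s :: "'g::t2_space \<Rightarrow> 'g" and m :: "'g \<Rightarrow> 'g \<Rightarrow> 'g" and i :: "'g \<Rightarrow> 'g"
    and \<sigma> :: "'g \<times> 'g \<Rightarrow> 'a::field"
    and \<pi> :: "('g \<Rightarrow> 'a) \<Rightarrow> 'q::ring"
  assumes "topological_groupoid r s m i"
    and "ample r s"
    and "effective r s"
    and "cocycle r s m \<sigma>"
    and "steinberg_ring_hom r s m \<sigma> \<pi>"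
  shows "inj_on \<pi> steinberg \<longleftrightarrow>
    (\<forall>V. V \<noteq> {} \<and> V \<subseteq> units r \<and> compact V \<and> openin (top_of_set (units r)) V
        \<longrightarrow> \<pi> (indicator V) \<noteq> 0)"
proof -
  interpret ample_groupoid r s m i
    using assms(1,2) by unfold_locales (auto simp: topological_groupoid_def)
  have openin_units: "openin (top_of_set (units r)) V \<longleftrightarrow> open V \<and> V \<subseteq> units r" for V
    by (rule openin_open_eq[OF open_units])
  show ?thesis
    unfolding inj_on_steinberg_iff_kernel[OF assms(5)] openin_units
  proof (intro iffI allI ballI impI)
    fix V :: "'g set"
    assume kernel: "\<forall>h\<in>steinberg. \<pi> h = 0 \<longrightarrow> h = (\<lambda>x. 0)"
      and V: "V \<noteq> {} \<and> V \<subseteq> units r \<and> compact V \<and> open V \<and> V \<subseteq> units r"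
    then obtain x where "x \<in> V"
      by blast
    then have "indicator V \<noteq> (\<lambda>x. 0 :: 'a)"
      by (metis indicator_simps(1) zero_neq_one)
    moreover have "indicator V \<in> steinberg"
      using V indicator_in_steinberg by blast
    ultimately show "\<pi> (indicator V) \<noteq> 0"
      using kernel by blast
  next
    fix h
    assume units_detect:
        "\<forall>V. V \<noteq> {} \<and> V \<subseteq> units r \<and> compact V \<and> open V \<and> V \<subseteq> units r
          \<longrightarrow> \<pi> (indicator V) \<noteq> 0"
      and h: "h \<in> steinberg" "\<pi> h = 0"
    show "h = (\<lambda>x. 0)"
    proof (rule ccontr)
      assume "h \<noteq> (\<lambda>x. 0)"
      then obtain \<gamma> where "h \<gamma> \<noteq> 0"
        by auto
      then obtain V where "V \<noteq> {}" "V \<subseteq> units r" "compact V" "open V" "\<pi> (indicator V) = 0"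
        by (rule unit_indicator_in_kernel[OF assms(3-5) h])
      with units_detect show False
        by blast
    qed
  qed
qed

end
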